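(* Let $d$ be a positive integer, let $\mathcal{T}_{d+1}$ be the $(d+1)$-regular tree with a fixed origin $0$, and let $\delta_0$ be the function on $\mathcal{T}_{d+1}$ equal to $1$ at $0$ and $0$ elsewhere. Let $n$ be a positive even integer. Then for $x\in\mathcal{T}_{d+1}$, writing $|x|$ for the distance from $x$ to $0$, $$P_n(T_d/2)\delta_0(x)=\begin{cases}0 & |x| \text{ odd or } |x|>n,\\[2pt] \dfrac{1-d}{2d^{n/2}} & |x|<n \text{ and } |x| \text{ even},\\[4pt] \dfrac{1}{2d^{n/2}} & |x|=n.\end{cases}$$ In particular, $|P_n(T_d/2)\delta_0(x)|\lesssim d^{-n/2}$ for all $x$ (with implied constant depending only on $d$).
   Context: $T_d$ is the operator on functions on $\mathcal{T}_{d+1}$ given by $T_d f(x)=\frac{1}{\sqrt d}\sum_{y:\operatorname{dist}(x,y)=1}f(y)$. $P_n$ is the Chebyshev polynomial of the first kind of degree $n$, defined by $P_n(\cos\theta)=\cos n\theta$, and $P_n(T_d/2)$ is the corresponding polynomial in the operator $T_d/2$. *)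

theory Defs
  imports "HOL-Analysis.Analysis" "HOL-Computational_Algebra.Polynomial"
begin

text \<open>The (d+1)-regular tree: vertices are the reduced words over the alphabet {0..d}
  (no two consecutive letters equal), i.e. the Cayley graph of the free product of d+1
  copies of Z/2.  The origin is the empty word; two vertices are adjacent iff one is
  obtained from the other by prepending a single letter.  The graph distance from a
  vertex to the origin is the length of the word.\<close>

definition tree_vertex :: "nat \<Rightarrow> nat list \<Rightarrow> bool" where
  "tree_vertex d w \<longleftrightarrow> set w \<subseteq> {0..d} \<and> (\<forall>i. Suc i < length w \<longrightarrow> w ! i \<noteq> w ! Suc i)"

definition tree_adj :: "nat \<Rightarrow> nat list \<Rightarrow> nat list \<Rightarrow> bool" where
  "tree_adj d x y \<longleftrightarrow> tree_vertex d x \<and> tree_vertex d y \<and>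
     ((\<exists>a. y = a # x) \<or> (\<exists>a. x = a # y))"

definition tree_neighbors :: "nat \<Rightarrow> nat list \<Rightarrow> nat list set" where
  "tree_neighbors d x = {y. tree_adj d x y}"

definition T_op :: "nat \<Rightarrow> (nat list \<Rightarrow> real) \<Rightarrow> (nat list \<Rightarrow> real)" where
  "T_op d f = (\<lambda>x. (1 / sqrt (real d)) * (\<Sum>y\<in>tree_neighbors d x. f y))"

definition delta0 :: "nat list \<Rightarrow> real" where
  "delta0 = (\<lambda>x. if x = [] then 1 else 0)"

text \<open>Chebyshev polynomials of the first kind (P_n(cos t) = cos (n t)), via the standard
  three-term recurrence.\<close>
fun cheb :: "nat \<Rightarrow> real poly" where
  "cheb 0 = 1"
| "cheb (Suc 0) = [:0, 1:]"
| "cheb (Suc (Suc n)) = [:0, 2:] * cheb (Suc n) - cheb n"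

definition poly_op :: "real poly \<Rightarrow> (('a \<Rightarrow> real) \<Rightarrow> ('a \<Rightarrow> real)) \<Rightarrow> ('a \<Rightarrow> real) \<Rightarrow> ('a \<Rightarrow> real)" where
  "poly_op p A f = (\<lambda>x. \<Sum>k\<le>degree p. coeff p k * (A ^^ k) f x)"

end

theory Submission imports Defs begin

text \<open>On the tree, functions of the distance to the origin are preserved by \<open>T_d\<close>: at distance
  \<open>r > 0\<close> a vertex has one neighbour at distance \<open>r - 1\<close> and \<open>d\<close> at distance \<open>r + 1\<close>, the origin
  has \<open>d + 1\<close> neighbours at distance 1.  Hence \<open>P_n(T_d/2) \<delta>\<^sub>0\<close> is radial, and the three-term
  recurrence of the Chebyshev polynomials becomes a recurrence for its radial profile, which is
  checked to be solved by the closed form (for odd \<open>n\<close> as well, with \<open>d^{n/2}\<close> read as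
  \<open>sqrt d ^ n\<close>).\<close>

lemma poly_op_eq_sum_atMost:
  assumes "degree p \<le> N"
  shows "poly_op p A f x = (\<Sum>k\<le>N. coeff p k * (A ^^ k) f x)"
  unfolding poly_op_def
  by (rule sum.mono_neutral_left) (use assms in \<open>auto simp: coeff_eq_0\<close>)

lemma poly_op_one [simp]: "poly_op 1 A f = f"
  by (simp add: poly_op_def)

lemma poly_op_smult: "poly_op (smult c p) A f x = c * poly_op p A f x"
  by (simp add: poly_op_eq_sum_atMost[of _ "degree p"] sum_distrib_left mult.assoc)

lemma poly_op_diff: "poly_op (p - q) A f x = poly_op p A f x - poly_op q A f x"
proof -
  define N where "N = max (degree p) (degree q)"
  have "degree (p - q) \<le> N"
    unfolding N_def by (rule degree_diff_le) auto
  then show ?thesis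
    by (simp add: poly_op_eq_sum_atMost[of _ N] N_def left_diff_distrib sum_subtractf)
qed

definition commutes_with_sums :: "(('a \<Rightarrow> real) \<Rightarrow> ('a \<Rightarrow> real)) \<Rightarrow> bool" where
  "commutes_with_sums A \<longleftrightarrow>
     (\<forall>c g (N::nat). A (\<lambda>y. \<Sum>k\<le>N. c k * g k y) = (\<lambda>y. \<Sum>k\<le>N. c k * A (g k) y))"

lemma poly_op_pCons_0:
  assumes lin: "commutes_with_sums A"
  shows "poly_op (pCons 0 p) A f = A (poly_op p A f)"
proof
  fix x
  have "degree (pCons 0 p) \<le> Suc (degree p)"
    by (rule degree_pCons_le)
  then have "poly_op (pCons 0 p) A f x = (\<Sum>k\<le>Suc (degree p). coeff (pCons 0 p) k * (A ^^ k) f x)"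
    by (rule poly_op_eq_sum_atMost)
  also have "\<dots> = (\<Sum>k\<le>degree p. coeff p k * A ((A ^^ k) f) x)"
    by (subst sum.atMost_Suc_shift) simp
  also have "\<dots> = A (poly_op p A f) x"
    using lin unfolding poly_op_def commutes_with_sums_def by simp
  finally show "poly_op (pCons 0 p) A f x = A (poly_op p A f) x" .
qed

lemma poly_op_cheb_Suc_Suc:
  assumes lin: "commutes_with_sums A"
  shows "poly_op (cheb (Suc (Suc n))) A f x
           = 2 * A (poly_op (cheb (Suc n)) A f) x - poly_op (cheb n) A f x"
proof -
  have "[:0, 2:] * cheb (Suc n) = pCons 0 (smult 2 (cheb (Suc n)))"
    by (simp add: mult_pCons_left)
  moreover have "A (poly_op (smult 2 p) A f) = (\<lambda>y. 2 * A (poly_op p A f) y)" for p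
  proof -
    have "poly_op (smult 2 p) A f = (\<lambda>y. 2 * poly_op p A f y)"
      by (simp add: fun_eq_iff poly_op_smult)
    then show ?thesis
      using lin[unfolded commutes_with_sums_def, rule_format, of "\<lambda>_. 2" "\<lambda>_. poly_op p A f" 0]
      by simp
  qed
  ultimately show ?thesis
    by (simp add: poly_op_diff poly_op_pCons_0[OF lin])
qed

lemma poly_op_cheb_1:
  assumes lin: "commutes_with_sums A"
  shows "poly_op (cheb 1) A f = A f"
proof -
  have "poly_op (pCons 0 1) A f = A (poly_op 1 A f)"
    using lin by (rule poly_op_pCons_0)
  then show ?thesis
    by (simp add: pCons_one)
qed

lemma commutes_with_sums_half_T_op: "commutes_with_sums (\<lambda>f y. T_op d f y / 2)"
  unfolding commutes_with_sums_def T_op_def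
  by (simp add: sum.swap[of _ "tree_neighbors _ _"] sum_distrib_left sum_divide_distrib mult_ac)

lemma tree_vertex_Nil [simp]: "tree_vertex d []"
  by (simp add: tree_vertex_def)

lemma tree_vertex_Cons:
  "tree_vertex d (a # x) \<longleftrightarrow> a \<le> d \<and> tree_vertex d x \<and> (x \<noteq> [] \<longrightarrow> a \<noteq> hd x)"
  unfolding tree_vertex_def
  by (cases x) (auto simp: All_less_Suc2 nth_Cons' split: if_splits)

lemma tree_neighbors_Nil: "tree_neighbors d [] = (\<lambda>a. [a]) ` {0..d}"
  by (auto simp: tree_neighbors_def tree_adj_def tree_vertex_Cons)

lemma tree_neighbors_Cons:
  "tree_vertex d (b # t) \<Longrightarrow>
     tree_neighbors d (b # t) = insert t ((\<lambda>a. a # b # t) ` ({0..d} - {b}))"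
  by (auto simp: tree_neighbors_def tree_adj_def tree_vertex_Cons)

definition radial_neighbor_sum :: "nat \<Rightarrow> (nat \<Rightarrow> real) \<Rightarrow> nat \<Rightarrow> real" where
  "radial_neighbor_sum d h r =
     (if r = 0 then real (d + 1) * h 1 else h (r - 1) + real d * h (r + 1))"

lemma sum_tree_neighbors_radial:
  assumes x: "tree_vertex d x" and g: "\<And>y. tree_vertex d y \<Longrightarrow> g y = h (length y)"
  shows "(\<Sum>y\<in>tree_neighbors d x. g y) = radial_neighbor_sum d h (length x)"
proof (cases x)
  case Nil
  have "(\<Sum>y\<in>tree_neighbors d x. g y) = (\<Sum>a\<in>{0..d}. g [a])"
    unfolding Nil tree_neighbors_Nil by (subst sum.reindex) (auto simp: inj_on_def)
  also have "\<dots> = (\<Sum>a\<in>{0..d}. h 1)"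
    using g by (intro sum.cong) (auto simp: tree_vertex_Cons)
  finally show ?thesis
    using Nil by (simp add: radial_neighbor_sum_def)
next
  case (Cons b t)
  have b: "b \<le> d" and t: "tree_vertex d t"
    using x Cons by (simp_all add: tree_vertex_Cons)
  have "(\<Sum>y\<in>tree_neighbors d x. g y) = g t + (\<Sum>a\<in>{0..d} - {b}. g (a # b # t))"
    unfolding Cons tree_neighbors_Cons[OF x[unfolded Cons]]
    by (subst sum.insert) (auto simp: sum.reindex inj_on_def)
  also have "\<dots> = h (length t) + (\<Sum>a\<in>{0..d} - {b}. h (length t + 2))"
    using g t x Cons by (intro arg_cong2[where f = "(+)"] sum.cong) (auto simp: tree_vertex_Cons)
  finally show ?thesis
    using Cons b by (simp add: radial_neighbor_sum_def)
qed

lemma T_op_radial: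
  assumes "tree_vertex d x" and "\<And>y. tree_vertex d y \<Longrightarrow> g y = h (length y)"
  shows "T_op d g x = radial_neighbor_sum d h (length x) / sqrt (real d)"
  using sum_tree_neighbors_radial[of d x g h, OF assms] by (simp add: T_op_def)

text \<open>The value at \<open>n = 0\<close> is the profile of \<open>\<delta>\<^sub>0\<close>, not the \<open>n = 0\<close> instance of the closed form.\<close>

definition cheb_profile :: "nat \<Rightarrow> nat \<Rightarrow> nat \<Rightarrow> real" where
  "cheb_profile d n r =
     (if n = 0 then (if r = 0 then 1 else 0)
      else if n < r \<or> odd (n + r) then 0
      else if r < n then (1 - real d) / (2 * sqrt (real d) ^ n)
      else 1 / (2 * sqrt (real d) ^ n))"

lemma cheb_profile_1:
  assumes "d \<ge> 1"
  shows "radial_neighbor_sum d (cheb_profile d 0) r / sqrt (real d) / 2 = cheb_profile d 1 r"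
  using assms by (auto simp: radial_neighbor_sum_def cheb_profile_def)

lemma cheb_profile_Suc_Suc:
  assumes "d \<ge> 1"
  shows "radial_neighbor_sum d (cheb_profile d (Suc m)) r / sqrt (real d) - cheb_profile d m r
           = cheb_profile d (Suc (Suc m)) r"
proof -
  define s where "s = sqrt (real d)"
  have "s > 0" and d: "real d = s * s"
    using assms by (simp_all add: s_def)
  then show ?thesis
    unfolding radial_neighbor_sum_def cheb_profile_def s_def[symmetric] of_nat_add of_nat_1 d
    by (cases m; cases r) (auto simp: field_simps power2_eq_square)
qed

lemma poly_op_cheb_delta0_radial:
  assumes "d \<ge> 1" and "tree_vertex d x"
  shows "poly_op (cheb n) (\<lambda>f y. T_op d f y / 2) delta0 x = cheb_profile d n (length x)"
  using assms(2)
proof (induction n arbitrary: x rule: cheb.induct)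
  let ?A = "\<lambda>f y. T_op d f y / 2"
  note lin = commutes_with_sums_half_T_op[of d]
  have delta0: "delta0 y = cheb_profile d 0 (length y)" for y
    by (simp add: delta0_def cheb_profile_def)
  {
    case (1 x)
    then show ?case
      by (simp add: delta0)
  next
    case (2 x)
    have "poly_op (cheb (Suc 0)) ?A delta0 x = T_op d delta0 x / 2"
      using poly_op_cheb_1[OF lin] by simp
    also have "\<dots> = radial_neighbor_sum d (cheb_profile d 0) (length x) / sqrt (real d) / 2"
      using T_op_radial[OF 2, of delta0 "cheb_profile d 0"] delta0 by simp
    finally show ?case
      using cheb_profile_1[OF assms(1)] by simp
  next
    case (3 n x)
    have "poly_op (cheb (Suc (Suc n))) ?A delta0 x
            = T_op d (poly_op (cheb (Suc n)) ?A delta0) x - poly_op (cheb n) ?A delta0 x"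
      using poly_op_cheb_Suc_Suc[OF lin] by (simp del: cheb.simps)
    also have "\<dots> = radial_neighbor_sum d (cheb_profile d (Suc n)) (length x) / sqrt (real d)
                       - cheb_profile d n (length x)"
      using T_op_radial[OF 3(3), of _ "cheb_profile d (Suc n)"] 3 by simp
    finally show ?case
      using cheb_profile_Suc_Suc[OF assms(1)] by simp
  }
qed

lemma cheb_profile_even:
  assumes "even n" and "n > 0"
  shows "cheb_profile d n r =
           (if odd r \<or> r > n then 0
            else if r < n then (1 - real d) / (2 * real d ^ (n div 2))
            else 1 / (2 * real d ^ (n div 2)))"
proof -
  have "sqrt (real d) ^ n = real d ^ (n div 2)"
    using assms(1) by (elim evenE) (simp add: power_mult)
  then show ?thesis
    using assms by (auto simp: cheb_profile_def)
qed

lemma cheb_profile_even_bound: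
  assumes "d \<ge> 1" and "even n" and "n > 0"
  shows "\<bar>cheb_profile d n r\<bar> \<le> real d * real d powr (- real n / 2)"
proof -
  have "real d ^ (n div 2) > 0"
    using assms(1) by simp
  then have "\<bar>cheb_profile d n r\<bar> \<le> real d / real d ^ (n div 2)"
    using assms by (auto simp: cheb_profile_even abs_divide divide_simps)
  moreover have "real d powr (- real n / 2) = 1 / real d ^ (n div 2)"
    using assms by (elim evenE) (simp add: powr_minus_divide powr_realpow)
  ultimately show ?thesis
    by simp
qed

theorem lemma1:
  fixes d :: nat
  assumes "d \<ge> 1"
  shows "(\<forall>n x. n > 0 \<longrightarrow> even n \<longrightarrow> tree_vertex d x \<longrightarrow>
            poly_op (cheb n) (\<lambda>f y. T_op d f y / 2) delta0 x =
              (if odd (length x) \<or> length x > n then 0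
               else if length x < n then (1 - real d) / (2 * real d ^ (n div 2))
               else 1 / (2 * real d ^ (n div 2))))
       \<and> (\<exists>C>0. \<forall>n x. n > 0 \<longrightarrow> even n \<longrightarrow> tree_vertex d x \<longrightarrow>
            \<bar>poly_op (cheb n) (\<lambda>f y. T_op d f y / 2) delta0 x\<bar> \<le> C * real d powr (- real n / 2))"
proof (intro conjI exI[of _ "real d"] allI impI)
  show "real d > 0"
    using assms by simp
next
  fix n :: nat and x :: "nat list"
  assume n: "n > 0" "even n" and x: "tree_vertex d x"
  note radial = poly_op_cheb_delta0_radial[OF assms x, of n]
  show "poly_op (cheb n) (\<lambda>f y. T_op d f y / 2) delta0 x =
          (if odd (length x) \<or> length x > n then 0
           else if length x < n then (1 - real d) / (2 * real d ^ (n div 2))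
           else 1 / (2 * real d ^ (n div 2)))"
    unfolding radial cheb_profile_even[OF n(2,1)] ..
  show "\<bar>poly_op (cheb n) (\<lambda>f y. T_op d f y / 2) delta0 x\<bar> \<le> real d * real d powr (- real n / 2)"
    unfolding radial by (rule cheb_profile_even_bound[OF assms n(2,1)])
qed

end
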